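(* Let $M$ be a unit speed curve $\gamma: I\to\mathbb{R}^3$ with arc-length parameter $s$, curvature $\kappa(s) \neq 0$ and torsion $\tau(s)$, and put $\varphi(s) = \int_0^s \tau(t)\,dt + \varphi_0$ for a constant $\varphi_0$. Let $K$ be a curve $\beta$, parametrized by the same arc-length parameter $s$, with $\beta''(s) = \overline{\kappa}(s)\gamma'(s)$, whose curvature and torsion are $$\overline{\kappa}(s) = \kappa(s)\cos\varphi(s), \qquad \overline{\tau}(s) = \kappa(s)\sin\varphi(s).$$ Let $u,w$ be functions on $I$, not simultaneously zero, and let $\lambda$ be a nonzero real constant. Then the curvatures of $K$ satisfy $u\overline{\kappa} - w\overline{\tau} = \lambda(\overline{\kappa}^2+\overline{\tau}^2)$ (the $V$-Mannheim condition for $K$) if and only if $$\kappa(s) = F(s)\cos\big(\varphi(s)+\phi(s)\big),$$ where $F(s) = \frac{\sqrt{u^2+w^2}}{\lambda}$, $\cos\phi(s) = \frac{u}{\sqrt{u^2+w^2}}$ and $\sin\phi(s) = \frac{w}{\sqrt{u^2+w^2}}$.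
   Context: For a unit vector field $V = uT+vN+wB$ along a curve with curvature $\kappa$ and torsion $\tau$, the paper characterizes $V$-Mannheim curves by the relation $u\kappa - w\tau = \lambda(\kappa^2+\tau^2)$; here this relation is imposed on the curvatures $\overline{\kappa},\overline{\tau}$ of $K$. *)

theory Defs
  imports "HOL-Analysis.Analysis" "HOL-Analysis.Cross3"
begin

definition dcurve :: "(real \<Rightarrow> real^3) \<Rightarrow> real \<Rightarrow> real^3" where
  "dcurve g = (\<lambda>t. vector_derivative g (at t))"

definition curvature :: "(real \<Rightarrow> real^3) \<Rightarrow> real \<Rightarrow> real" where
  "curvature g s = norm (dcurve (dcurve g) s)"

definition torsion :: "(real \<Rightarrow> real^3) \<Rightarrow> real \<Rightarrow> real" where
  "torsion g s = (cross3 (dcurve g s) (dcurve (dcurve g) s) \<bullet> dcurve (dcurve (dcurve g)) s)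
                 / (curvature g s)^2"

definition oint :: "real \<Rightarrow> real \<Rightarrow> (real \<Rightarrow> real) \<Rightarrow> real" where
  "oint a b f = (if a \<le> b then integral {a..b} f else - integral {b..a} f)"

end

theory Submission
  imports Defs
begin

text \<open>Only the pointwise relations between the curvatures enter the argument: substituting
  \<open>\<kappa>K = \<kappa> cos \<phi>\<close> and \<open>\<tau>K = \<kappa> sin \<phi>\<close> gives \<open>\<kappa>K\<^sup>2 + \<tau>K\<^sup>2 = \<kappa>\<^sup>2\<close>, so after cancelling
  \<open>\<kappa> \<noteq> 0\<close> the Mannheim condition becomes \<open>u cos \<phi> - w sin \<phi> = \<lambda> \<kappa>\<close>, and the left-hand
  side is \<open>\<surd>(u\<^sup>2 + w\<^sup>2) cos (\<phi> + \<psi>)\<close> by the addition formula for the cosine.\<close>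

lemma Mannheim_condition_rotated_iff:
  fixes k \<phi> u w lam :: real
  assumes "k \<noteq> 0"
  shows "u * (k * cos \<phi>) - w * (k * sin \<phi>) = lam * ((k * cos \<phi>)\<^sup>2 + (k * sin \<phi>)\<^sup>2)
     \<longleftrightarrow> u * cos \<phi> - w * sin \<phi> = lam * k"
proof -
  have "(k * cos \<phi>)\<^sup>2 + (k * sin \<phi>)\<^sup>2 = k\<^sup>2"
    by (simp add: power_mult_distrib flip: distrib_left)
  then have "u * (k * cos \<phi>) - w * (k * sin \<phi>) = lam * ((k * cos \<phi>)\<^sup>2 + (k * sin \<phi>)\<^sup>2)
      \<longleftrightarrow> k * (u * cos \<phi> - w * sin \<phi>) = k * (lam * k)"
    by (simp add: algebra_simps power2_eq_square)
  with assms show ?thesis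
    by simp
qed

lemma harmonic_addition_cos:
  fixes u w \<phi> \<psi> :: real
  assumes "u \<noteq> 0 \<or> w \<noteq> 0"
    and "cos \<psi> = u / sqrt (u\<^sup>2 + w\<^sup>2)" "sin \<psi> = w / sqrt (u\<^sup>2 + w\<^sup>2)"
  shows "u * cos \<phi> - w * sin \<phi> = sqrt (u\<^sup>2 + w\<^sup>2) * cos (\<phi> + \<psi>)"
proof -
  have "sqrt (u\<^sup>2 + w\<^sup>2) \<noteq> 0"
    using assms(1) by simp
  with assms(2,3) show ?thesis
    by (simp add: cos_add field_simps)
qed

theorem mainTheorem4:
  fixes \<gamma> \<beta> :: "real \<Rightarrow> real^3"
    and I :: "real set"
    and \<kappa> \<tau> \<phi> \<kappa>K \<tau>K u w \<psi> F :: "real \<Rightarrow> real"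
    and \<phi>0 lam :: real
  assumes I: "open I" "is_interval I" "0 \<in> I"
    and smooth: "\<forall>s\<in>I. \<gamma> differentiable (at s) \<and> dcurve \<gamma> differentiable (at s)
                        \<and> dcurve (dcurve \<gamma>) differentiable (at s)"
    and unit: "\<forall>s\<in>I. norm (dcurve \<gamma> s) = 1"
    and kap: "\<forall>s\<in>I. \<kappa> s = curvature \<gamma> s \<and> \<kappa> s \<noteq> 0"
    and tau: "\<forall>s\<in>I. \<tau> s = torsion \<gamma> s"
    and tau_int: "\<forall>s\<in>I. \<tau> integrable_on (closed_segment 0 s)"
    and phi: "\<forall>s\<in>I. \<phi> s = oint 0 s \<tau> + \<phi>0"
    and beta_smooth: "\<forall>s\<in>I. \<beta> differentiable (at s) \<and> dcurve \<beta> differentiable (at s)"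
    and beta2: "\<forall>s\<in>I. dcurve (dcurve \<beta>) s = \<kappa>K s *\<^sub>R dcurve \<gamma> s"
    and kapK: "\<forall>s\<in>I. \<kappa>K s = \<kappa> s * cos (\<phi> s)"
    and tauK: "\<forall>s\<in>I. \<tau>K s = \<kappa> s * sin (\<phi> s)"
    and uw: "\<forall>s\<in>I. u s \<noteq> 0 \<or> w s \<noteq> 0"
    and lam_nz: "lam \<noteq> 0"
    and F: "\<forall>s\<in>I. F s = sqrt ((u s)^2 + (w s)^2) / lam"
    and psi: "\<forall>s\<in>I. cos (\<psi> s) = u s / sqrt ((u s)^2 + (w s)^2)
                   \<and> sin (\<psi> s) = w s / sqrt ((u s)^2 + (w s)^2)"
  shows "(\<forall>s\<in>I. u s * \<kappa>K s - w s * \<tau>K s = lam * ((\<kappa>K s)^2 + (\<tau>K s)^2))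
     \<longleftrightarrow> (\<forall>s\<in>I. \<kappa> s = F s * cos (\<phi> s + \<psi> s))"
proof (rule ball_cong[OF refl])
  fix s
  assume s: "s \<in> I"
  have "\<kappa> s \<noteq> 0" "\<kappa>K s = \<kappa> s * cos (\<phi> s)" "\<tau>K s = \<kappa> s * sin (\<phi> s)"
    using kap kapK tauK s by auto
  then have "u s * \<kappa>K s - w s * \<tau>K s = lam * ((\<kappa>K s)\<^sup>2 + (\<tau>K s)\<^sup>2)
      \<longleftrightarrow> u s * cos (\<phi> s) - w s * sin (\<phi> s) = lam * \<kappa> s"
    by (simp add: Mannheim_condition_rotated_iff)
  also have "\<dots> \<longleftrightarrow> sqrt ((u s)\<^sup>2 + (w s)\<^sup>2) * cos (\<phi> s + \<psi> s) = lam * \<kappa> s"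
    using harmonic_addition_cos[of "u s" "w s" "\<psi> s" "\<phi> s"] uw psi s by simp
  also have "\<dots> \<longleftrightarrow> \<kappa> s = sqrt ((u s)\<^sup>2 + (w s)\<^sup>2) / lam * cos (\<phi> s + \<psi> s)"
    using lam_nz by (auto simp: field_simps)
  also have "\<dots> \<longleftrightarrow> \<kappa> s = F s * cos (\<phi> s + \<psi> s)"
    using F s by simp
  finally show "u s * \<kappa>K s - w s * \<tau>K s = lam * ((\<kappa>K s)\<^sup>2 + (\<tau>K s)\<^sup>2)
      \<longleftrightarrow> \<kappa> s = F s * cos (\<phi> s + \<psi> s)" .
qed

end
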